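(* Let $k\in \mathbb{N}$. A tournament $T$ is $k$-linked if and only if $|V(T)|\geq 2k$ and, whenever $(x_1,y_1), \dots, (x_k,y_k)$ are ordered pairs of (not necessarily distinct) vertices of $T$, there exist distinct internally vertex-disjoint paths $P_1, \dots, P_k$ such that for all $i\in \{1,\dots, k\}$, $P_i$ is a directed path from $x_i$ to $y_i$ and $\{x_1,\dots, x_k, y_1, \dots, y_k\}\cap V(P_i)=\{x_i, y_i\}$.
   Context: A tournament is an orientation of a complete graph. A tournament $T$ is $k$-linked if $|V(T)|\geq 2k$ and whenever $x_1,\dots, x_k, y_1, \dots, y_k$ are $2k$ distinct vertices of $T$ there exist vertex-disjoint directed paths $P_1,\dots, P_k$ such that $P_i$ is a directed path from $x_i$ to $y_i$ for each $i$. *)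

theory Defs
  imports Main
begin

definition tournament :: "'a set \<Rightarrow> ('a \<Rightarrow> 'a \<Rightarrow> bool) \<Rightarrow> bool" where
  "tournament V E \<longleftrightarrow> finite V
     \<and> (\<forall>u v. E u v \<longrightarrow> u \<in> V \<and> v \<in> V)
     \<and> (\<forall>u. \<not> E u u)
     \<and> (\<forall>u\<in>V. \<forall>v\<in>V. u \<noteq> v \<longrightarrow> E u v \<or> E v u)
     \<and> (\<forall>u v. E u v \<longrightarrow> \<not> E v u)"

text \<open>A directed path, given as its vertex sequence v0,...,vm: nonempty, in V,
  consecutive vertices joined by arcs, vertices pairwise distinct except
  that the first may coincide with the last (so a path from x to x is either
  the trivial path [x] or a directed cycle through x).  If the endpoints
  differ this is exactly an ordinary directed path.\<close>
definition dpath :: "'a set \<Rightarrow> ('a \<Rightarrow> 'a \<Rightarrow> bool) \<Rightarrow> 'a list \<Rightarrow> bool" where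
  "dpath V E ps \<longleftrightarrow> ps \<noteq> [] \<and> set ps \<subseteq> V
     \<and> (\<forall>i. Suc i < length ps \<longrightarrow> E (ps ! i) (ps ! Suc i))
     \<and> distinct (butlast ps) \<and> distinct (tl ps)"

definition k_linked :: "'a set \<Rightarrow> ('a \<Rightarrow> 'a \<Rightarrow> bool) \<Rightarrow> nat \<Rightarrow> bool" where
  "k_linked V E k \<longleftrightarrow> 2 * k \<le> card V
     \<and> (\<forall>x y :: nat \<Rightarrow> 'a.
          (\<forall>i\<in>{1..k}. x i \<in> V \<and> y i \<in> V)
          \<and> inj_on x {1..k} \<and> inj_on y {1..k} \<and> x ` {1..k} \<inter> y ` {1..k} = {}
          \<longrightarrow> (\<exists>P :: nat \<Rightarrow> 'a list.
                (\<forall>i\<in>{1..k}. dpath V E (P i) \<and> hd (P i) = x i \<and> last (P i) = y i)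
              \<and> (\<forall>i\<in>{1..k}. \<forall>j\<in>{1..k}. i \<noteq> j \<longrightarrow> set (P i) \<inter> set (P j) = {})))"

end

theory Submission
  imports Defs
begin

text \<open>
  Repeated terminals are eliminated one at a time.  If the source x_i also occurs elsewhere among
  the terminals, fewer than 2k distinct terminals remain, and in a k-linked digraph every vertex
  v of a set S with |S| < 2k has an out-neighbour outside S: link v to a vertex outside S while
  the other k - 1 pairs fill up a set of 2k - 2 vertices containing S - {v}; the second vertex of
  that path will do.  Replacing x_i by such an out-neighbour w increases the number of distinct
  terminals, and prepending x_i to the path found for w gives back a path for the original pair.
  Repeated targets are handled in the same way after reversing all arcs, and once all 2k
  terminals are distinct the definition of k-linkedness applies directly.
\<close>

lemma inj_on_if_notin_image_Diff:
  "(\<And>a. a \<in> A \<Longrightarrow> f a \<notin> f ` (A - {a})) \<Longrightarrow> inj_on f A"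
  by (rule inj_onI) (metis DiffI imageI singletonD)

lemma image_fun_upd_terminals:
  assumes "i \<in> {1..k}" "x i \<in> x ` ({1..k} - {i}) \<union> y ` {1..k}"
  shows "(x(i := w)) ` {1..k} \<union> y ` {1..k} = insert w (x ` {1..k} \<union> y ` {1..k})"
  using assms by (auto simp: image_def)

lemma card_terminals_less:
  assumes "i \<in> {1..k}" "x i \<in> x ` ({1..k} - {i}) \<union> y ` {1..k}"
  shows "card (x ` {1..k} \<union> y ` {1..k}) < 2 * k"
proof -
  have "x ` {1..k} \<union> y ` {1..k} = x ` ({1..k} - {i}) \<union> y ` {1..k}"
    using assms by blast
  also have "card \<dots> \<le> card (x ` ({1..k} - {i})) + card (y ` {1..k})"
    by (rule card_Un_le)
  also have "\<dots> \<le> card ({1..k} - {i}) + card {1..k}"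
    by (intro add_mono card_image_le) simp_all
  also have "\<dots> < 2 * k"
    using assms(1) by auto
  finally show ?thesis .
qed

lemma dpath_iff:
  "dpath V E p \<longleftrightarrow> p \<noteq> [] \<and> set p \<subseteq> V \<and> successively E p
     \<and> distinct (butlast p) \<and> distinct (tl p)"
  by (simp add: dpath_def successively_conv_nth)

lemma dpath_ends_in_set:
  assumes "dpath V E p"
  shows "hd p \<in> set p" "last p \<in> set p"
  using assms by (simp_all add: dpath_def)

lemma dpath_distinct:
  assumes "dpath V E p" "hd p \<noteq> last p"
  shows "distinct p"
proof (cases p rule: rev_cases)
  case (snoc q b)
  then show ?thesis
    using assms by (cases q) (auto simp: dpath_def)
qed (use assms in \<open>simp add: dpath_def\<close>)

lemma dpath_conversep:
  "dpath V E p \<Longrightarrow> dpath V E\<inverse>\<inverse> (rev p)"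
  using butlast_rev[of "rev p"] by (simp add: dpath_iff)

lemma dpath_Cons:
  assumes "dpath V E p" "hd p \<noteq> last p" "v \<in> V" "E v (hd p)" "v \<in> set p \<Longrightarrow> v = last p"
  shows "dpath V E (v # p)"
proof -
  have "distinct p"
    using assms(1,2) by (rule dpath_distinct)
  then have "v \<notin> set (butlast p)"
    using assms(5) by (cases p rule: rev_cases) (auto dest: in_set_butlastD)
  then show ?thesis
    using assms \<open>distinct p\<close> by (auto simp: dpath_iff successively_Cons distinct_butlast)
qed

lemma dpath_Cons_terminal:
  assumes p: "dpath V E p" "hd p = w" "last p = y" "set p \<inter> insert w S = {w, y}"
    and "w \<notin> S" "x \<in> S" "y \<in> S" "x \<in> V" "E x w"
  shows "dpath V E (x # p)" "set (x # p) \<inter> S = {x, y}"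
proof -
  have "w \<noteq> y"
    using assms(5,7) by auto
  have "set p \<inter> S = {y}"
    using p(4) assms(5,7) by auto
  then have "x \<in> set p \<Longrightarrow> x = last p"
    using assms(6) p(3) by blast
  then show "dpath V E (x # p)"
    using p assms(8,9) \<open>w \<noteq> y\<close> by (intro dpath_Cons) auto
  show "set (x # p) \<inter> S = {x, y}"
    using \<open>set p \<inter> S = {y}\<close> assms(6) by auto
qed

lemma dpath_second_vertex:
  assumes "dpath V E p" "hd p \<noteq> last p"
  obtains u where "u \<in> set p" "u \<noteq> hd p" "E (hd p) u"
proof -
  obtain a b q where p: "p = a # b # q"
    using assms by (cases p; cases "tl p") (auto simp: dpath_def)
  then show thesis
    using that assms dpath_distinct[OF assms] by (auto simp: dpath_iff)
qed

lemma k_linkedD: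
  assumes "k_linked V E k" "\<forall>i\<in>{1..k}. x i \<in> V \<and> y i \<in> V"
    "inj_on x {1..k}" "inj_on y {1..k}" "x ` {1..k} \<inter> y ` {1..k} = {}"
  obtains P where "\<forall>i\<in>{1..k}. dpath V E (P i) \<and> hd (P i) = x i \<and> last (P i) = y i"
    "\<forall>i\<in>{1..k}. \<forall>j\<in>{1..k}. i \<noteq> j \<longrightarrow> set (P i) \<inter> set (P j) = {}"
proof -
  have "\<exists>P. (\<forall>i\<in>{1..k}. dpath V E (P i) \<and> hd (P i) = x i \<and> last (P i) = y i)
    \<and> (\<forall>i\<in>{1..k}. \<forall>j\<in>{1..k}. i \<noteq> j \<longrightarrow> set (P i) \<inter> set (P j) = {})"
    using assms unfolding k_linked_def by simp
  then show thesis using that by blast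
qed

lemma k_linked_conversep:
  assumes "k_linked V E k"
  shows "k_linked V E\<inverse>\<inverse> k"
  unfolding k_linked_def
proof (intro conjI allI impI)
  show "2 * k \<le> card V" using assms by (simp add: k_linked_def)
next
  fix x y :: "nat \<Rightarrow> 'a"
  assume "(\<forall>i\<in>{1..k}. x i \<in> V \<and> y i \<in> V) \<and> inj_on x {1..k} \<and> inj_on y {1..k}
    \<and> x ` {1..k} \<inter> y ` {1..k} = {}"
  then obtain P where "\<forall>i\<in>{1..k}. dpath V E (P i) \<and> hd (P i) = y i \<and> last (P i) = x i"
    and "\<forall>i\<in>{1..k}. \<forall>j\<in>{1..k}. i \<noteq> j \<longrightarrow> set (P i) \<inter> set (P j) = {}"
    using assms unfolding k_linked_def by (metis inf_commute)
  then show "\<exists>P. (\<forall>i\<in>{1..k}. dpath V E\<inverse>\<inverse> (P i) \<and> hd (P i) = x i \<and> last (P i) = y i)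
    \<and> (\<forall>i\<in>{1..k}. \<forall>j\<in>{1..k}. i \<noteq> j \<longrightarrow> set (P i) \<inter> set (P j) = {})"
    by (intro exI[of _ "\<lambda>i. rev (P i)"]) (auto simp: dpath_conversep hd_rev last_rev)
qed

lemma k_linked_avoiding_path:
  assumes kl: "k_linked V E k" and "k \<ge> 1"
    and T: "T \<subseteq> V" "finite T" "card T = 2 * k - 2"
    and ab: "a \<in> V" "b \<in> V" "a \<noteq> b" "a \<notin> T" "b \<notin> T"
  obtains p where "dpath V E p" "hd p = a" "last p = b" "set p \<inter> T = {}"
proof -
  let ?J = "{1..<k}"
  have "k - 1 \<le> card T" using T by simp
  then obtain A where A: "A \<subseteq> T" "card A = k - 1" "finite A"
    by (rule obtain_subset_with_card_n)
  have "card (T - A) = k - 1"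
    using A T by (simp add: card_Diff_subset)
  then obtain f g where f: "bij_betw f ?J A" and g: "bij_betw g ?J (T - A)"
    using A T bij_betw_iff_card[of ?J A] bij_betw_iff_card[of ?J "T - A"] by auto
  \<comment> \<open>The other k - 1 pairs occupy all of T, so the path from a to b must avoid it.\<close>
  define x where "x = f(k := a)"
  define y where "y = g(k := b)"
  have I: "{1..k} = insert k ?J" using \<open>k \<ge> 1\<close> by auto
  have "x k = a" "y k = b" by (simp_all add: x_def y_def)
  have "x ` ?J = A" "inj_on x ?J" "y ` ?J = T - A" "inj_on y ?J"
    using f g unfolding x_def y_def bij_betw_def by (auto simp: inj_on_def image_def)
  then have x: "x ` {1..k} = insert a A" "inj_on x {1..k}"
    and y: "y ` {1..k} = insert b (T - A)" "inj_on y {1..k}"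
    using ab A unfolding I by (auto simp: \<open>x k = a\<close> \<open>y k = b\<close>)
  have "x ` {1..k} \<subseteq> V" "y ` {1..k} \<subseteq> V"
    using x y A T ab by auto
  then have "\<forall>i\<in>{1..k}. x i \<in> V \<and> y i \<in> V"
    by (simp add: image_subset_iff)
  moreover have "x ` {1..k} \<inter> y ` {1..k} = {}"
    using x y A T ab by auto
  ultimately obtain P where P: "\<forall>i\<in>{1..k}. dpath V E (P i) \<and> hd (P i) = x i \<and> last (P i) = y i"
    and disj: "\<forall>i\<in>{1..k}. \<forall>j\<in>{1..k}. i \<noteq> j \<longrightarrow> set (P i) \<inter> set (P j) = {}"
    by (rule k_linkedD[OF kl _ x(2) y(2)])
  have ends: "x j \<in> set (P j)" "y j \<in> set (P j)" if "j \<in> {1..k}" for j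
    using P that dpath_ends_in_set[of V E "P j"] by simp_all
  have "T = x ` ?J \<union> y ` ?J"
    using \<open>x ` ?J = A\<close> \<open>y ` ?J = T - A\<close> A(1) by auto
  then have "T \<subseteq> (\<Union>j\<in>?J. set (P j))"
    using ends I by auto
  moreover have "set (P k) \<inter> (\<Union>j\<in>?J. set (P j)) = {}"
    using disj I by auto
  ultimately have "set (P k) \<inter> T = {}"
    by blast
  then show thesis
    using that[of "P k"] P I \<open>x k = a\<close> \<open>y k = b\<close> by auto
qed

lemma k_linked_out_neighbour:
  assumes kl: "k_linked V E k" and S: "S \<subseteq> V" "v \<in> S" "card S < 2 * k"
  obtains w where "w \<in> V - S" "E v w"
proof -
  have "2 * k \<le> card V" using kl by (simp add: k_linked_def)
  then have fin: "finite V" and "k \<ge> 1" using S by (auto intro: card_ge_0_finite)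
  have "v \<in> V" "finite S" using S fin by (auto simp: finite_subset)
  then have small: "card (S - {v}) \<le> 2 * k - 2" and "card (V - {v}) = card V - 1"
    using S by (simp_all add: card_Diff_singleton)
  then have large: "2 * k - 2 < card (V - {v})"
    using \<open>2 * k \<le> card V\<close> \<open>k \<ge> 1\<close> by linarith
  obtain T where T: "S - {v} \<subseteq> T" "T \<subseteq> V - {v}" "card T = 2 * k - 2"
    using exists_subset_between[OF small less_imp_le[OF large]] S fin by auto
  with large have "T \<noteq> V - {v}" by auto
  with T obtain z where z: "z \<in> V" "z \<noteq> v" "z \<notin> T"
    by blast
  obtain p where p: "dpath V E p" "hd p = v" "last p = z" "set p \<inter> T = {}"
    using k_linked_avoiding_path[OF kl \<open>k \<ge> 1\<close>, of T v z] T z \<open>v \<in> V\<close> fin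
    by (auto simp: finite_subset)
  then obtain u where u: "u \<in> set p" "u \<noteq> v" "E v u"
    using z by (metis dpath_second_vertex)
  have "u \<in> V - S"
    using u p T unfolding dpath_def by blast
  then show thesis using u(3) by (rule that)
qed

definition linkage ::
  "'a set \<Rightarrow> ('a \<Rightarrow> 'a \<Rightarrow> bool) \<Rightarrow> nat \<Rightarrow> (nat \<Rightarrow> 'a) \<Rightarrow> (nat \<Rightarrow> 'a) \<Rightarrow> (nat \<Rightarrow> 'a list) \<Rightarrow> bool"
  where "linkage V E k x y P \<longleftrightarrow>
     (\<forall>i\<in>{1..k}. dpath V E (P i) \<and> hd (P i) = x i \<and> last (P i) = y i
        \<and> set (P i) \<inter> (x ` {1..k} \<union> y ` {1..k}) = {x i, y i})
   \<and> (\<forall>i\<in>{1..k}. \<forall>j\<in>{1..k}. i \<noteq> j \<longrightarrow>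
        P i \<noteq> P j \<and> (set (P i) - {x i, y i}) \<inter> set (P j) = {})"

lemma linkage_conversep:
  "linkage V E k x y P \<Longrightarrow> linkage V E\<inverse>\<inverse> k y x (\<lambda>i. rev (P i))"
  by (auto simp: linkage_def dpath_conversep hd_rev last_rev Un_commute insert_commute)

lemma linkage_if_disjoint_paths:
  assumes P: "\<forall>i\<in>{1..k}. dpath V E (P i) \<and> hd (P i) = x i \<and> last (P i) = y i"
    and disj: "\<forall>i\<in>{1..k}. \<forall>j\<in>{1..k}. i \<noteq> j \<longrightarrow> set (P i) \<inter> set (P j) = {}"
  shows "linkage V E k x y P"
proof -
  have ends: "x i \<in> set (P i)" "y i \<in> set (P i)" "P i \<noteq> []" if "i \<in> {1..k}" for i
    using P that dpath_ends_in_set[of V E "P i"] by (simp_all add: dpath_def)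
  have "dpath V E (P i) \<and> hd (P i) = x i \<and> last (P i) = y i
      \<and> set (P i) \<inter> (x ` {1..k} \<union> y ` {1..k}) = {x i, y i}" if i: "i \<in> {1..k}" for i
  proof -
    have "z \<in> {x i, y i}" if "z \<in> set (P i)" "j \<in> {1..k}" "z = x j \<or> z = y j" for z j
      using disj[rule_format, OF i that(2)] ends[OF that(2)] that by (cases "j = i") auto
    then have "set (P i) \<inter> (x ` {1..k} \<union> y ` {1..k}) \<subseteq> {x i, y i}"
      by fastforce
    then show ?thesis
      using P ends i by auto
  qed
  moreover have "P i \<noteq> P j \<and> (set (P i) - {x i, y i}) \<inter> set (P j) = {}"
    if "i \<in> {1..k}" "j \<in> {1..k}" "i \<noteq> j" for i j
    using disj[rule_format, OF that] ends[OF that(1)] by auto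
  ultimately show ?thesis
    by (simp add: linkage_def)
qed

lemma disjoint_paths_if_linkage:
  assumes "linkage V E k x y P" "inj_on x {1..k}" "inj_on y {1..k}"
    "x ` {1..k} \<inter> y ` {1..k} = {}"
  shows "\<forall>i\<in>{1..k}. \<forall>j\<in>{1..k}. i \<noteq> j \<longrightarrow> set (P i) \<inter> set (P j) = {}"
proof (intro ballI impI)
  fix i j assume ij: "i \<in> {1..k}" "j \<in> {1..k}" "i \<noteq> j"
  then have "x i \<noteq> x j" "y i \<noteq> y j" "x i \<noteq> y j" "y i \<noteq> x j"
    using assms(2-4) by (auto dest: inj_onD, blast+)
  then have "{x i, y i} \<inter> {x j, y j} = {}"
    by auto
  moreover have "set (P i) \<inter> set (P j) \<subseteq> {x i, y i} \<inter> set (P j)"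
    and "set (P j) \<inter> (x ` {1..k} \<union> y ` {1..k}) = {x j, y j}"
    using assms(1) ij unfolding linkage_def by blast+
  ultimately show "set (P i) \<inter> set (P j) = {}"
    using ij by blast
qed

lemma linkage_fun_upd_source_paths:
  assumes L: "linkage V E k (x(i := w)) y P" and i: "i \<in> {1..k}"
    and rep: "x i \<in> x ` ({1..k} - {i}) \<union> y ` {1..k}"
    and w: "w \<notin> x ` {1..k} \<union> y ` {1..k}"
    and l: "l \<in> {1..k}"
  shows "dpath V E (P l) \<and> hd (P l) = (x(i := w)) l \<and> last (P l) = y l
      \<and> set (P l) \<inter> insert w (x ` {1..k} \<union> y ` {1..k}) = {(x(i := w)) l, y l}"
  using L l unfolding linkage_def image_fun_upd_terminals[OF i rep] by blast

lemma linkage_Cons_source_path: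
  assumes L: "linkage V E k (x(i := w)) y P" and i: "i \<in> {1..k}"
    and rep: "x i \<in> x ` ({1..k} - {i}) \<union> y ` {1..k}"
    and w: "w \<notin> x ` {1..k} \<union> y ` {1..k}" and "x i \<in> V" "E (x i) w"
    and l: "l \<in> {1..k}"
  defines "Q \<equiv> P(i := x i # P i)"
  shows "dpath V E (Q l) \<and> hd (Q l) = x l \<and> last (Q l) = y l
      \<and> set (Q l) \<inter> (x ` {1..k} \<union> y ` {1..k}) = {x l, y l}"
proof (cases "l = i")
  case True
  let ?S = "x ` {1..k} \<union> y ` {1..k}"
  have "dpath V E (P i)" "hd (P i) = w" "last (P i) = y i" "set (P i) \<inter> insert w ?S = {w, y i}"
    using linkage_fun_upd_source_paths[OF L i rep w i] by simp_all
  then have "dpath V E (x i # P i)" "set (x i # P i) \<inter> ?S = {x i, y i}" "P i \<noteq> []"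
    using dpath_Cons_terminal[of V E "P i" w "y i" ?S "x i"] w i assms(5,6)
    by (auto simp: dpath_def)
  then show ?thesis
    using True \<open>last (P i) = y i\<close> by (simp add: Q_def)
next
  case False
  then show ?thesis
    using linkage_fun_upd_source_paths[OF L i rep w l] l by (auto simp: Q_def)
qed

lemma linkage_Cons_source:
  assumes L: "linkage V E k (x(i := w)) y P" and i: "i \<in> {1..k}"
    and rep: "x i \<in> x ` ({1..k} - {i}) \<union> y ` {1..k}"
    and w: "w \<notin> x ` {1..k} \<union> y ` {1..k}" and "x i \<in> V" "E (x i) w"
  shows "linkage V E k x y (P(i := x i # P i))"
proof -
  define Q where "Q = P(i := x i # P i)"
  note old_paths = linkage_fun_upd_source_paths[OF L i rep w]
  have old_disj: "(set (P a) - {(x(i := w)) a, y a}) \<inter> set (P b) = {}" "P a \<noteq> P b"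
    if "a \<in> {1..k}" "b \<in> {1..k}" "a \<noteq> b" for a b
    using L that unfolding linkage_def by blast+
  have w_notin: "w \<notin> set (P l)" and xi_notin: "x i \<notin> set (P l) - {x l, y l}"
    if "l \<in> {1..k}" "l \<noteq> i" for l
  proof -
    have "w \<noteq> x l" "w \<noteq> y l" "x i \<in> x ` {1..k} \<union> y ` {1..k}"
      using w i that by auto
    then show "w \<notin> set (P l)" "x i \<notin> set (P l) - {x l, y l}"
      using old_paths[OF that(1)] that(2) by auto
  qed
  have disj: "(set (Q a) - {x a, y a}) \<inter> set (Q b) = {}"
    if "a \<in> {1..k}" "b \<in> {1..k}" "a \<noteq> b" for a b
    using old_disj[OF that] w_notin[OF that(2)] xi_notin[OF that(1)] that
    by (cases "a = i"; cases "b = i") (auto simp: Q_def)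
  have "w \<in> set (Q i)"
    using old_paths[OF i] by (auto simp: Q_def dpath_def)
  have neq: "Q a \<noteq> Q b" if "a \<in> {1..k}" "b \<in> {1..k}" "a \<noteq> b" for a b
  proof
    assume eq: "Q a = Q b"
    then have "set (Q a) \<subseteq> {x a, y a}" "set (Q b) \<subseteq> {x b, y b}"
      using disj[OF that] disj[OF that(2,1)] that(3) by auto
    moreover have "w \<notin> {x a, y a}" "w \<notin> {x b, y b}"
      using w that by auto
    ultimately have "a \<noteq> i" "b \<noteq> i"
      using \<open>w \<in> set (Q i)\<close> eq by auto
    then show False
      using old_disj[OF that] eq by (simp add: Q_def)
  qed
  show ?thesis
    using linkage_Cons_source_path[OF assms] disj neq unfolding Q_def[symmetric]
    by (simp add: linkage_def)
qed

lemma linkage_reduce_source: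
  assumes kl: "k_linked V E k" and V: "\<forall>j\<in>{1..k}. x j \<in> V \<and> y j \<in> V"
    and i: "i \<in> {1..k}" and rep: "x i \<in> x ` ({1..k} - {i}) \<union> y ` {1..k}"
  obtains w where "\<forall>j\<in>{1..k}. (x(i := w)) j \<in> V \<and> y j \<in> V"
    "2 * k - card ((x(i := w)) ` {1..k} \<union> y ` {1..k}) < 2 * k - card (x ` {1..k} \<union> y ` {1..k})"
    "\<And>P. linkage V E k (x(i := w)) y P \<Longrightarrow> linkage V E k x y (P(i := x i # P i))"
proof -
  let ?S = "x ` {1..k} \<union> y ` {1..k}"
  have "card ?S < 2 * k"
    using i rep by (rule card_terminals_less)
  moreover have "?S \<subseteq> V" "x i \<in> ?S"
    using V i by auto
  ultimately obtain w where w: "w \<in> V - ?S" "E (x i) w"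
    using k_linked_out_neighbour[OF kl] by metis
  have "(x(i := w)) ` {1..k} \<union> y ` {1..k} = insert w ?S"
    using i rep by (rule image_fun_upd_terminals)
  then have "2 * k - card ((x(i := w)) ` {1..k} \<union> y ` {1..k}) < 2 * k - card ?S"
    using w(1) \<open>card ?S < 2 * k\<close> by simp
  moreover have "\<forall>j\<in>{1..k}. (x(i := w)) j \<in> V \<and> y j \<in> V"
    using V w(1) by simp
  moreover have "linkage V E k x y (P(i := x i # P i))"
    if "linkage V E k (x(i := w)) y P" for P
    using that i rep w V by (intro linkage_Cons_source) auto
  ultimately show thesis
    using that by blast
qed

lemma linkage_if_k_linked:
  assumes "k_linked V E k" "\<forall>i\<in>{1..k}. x i \<in> V \<and> y i \<in> V"
  shows "\<exists>P. linkage V E k x y P"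
  using assms
proof (induction "2 * k - card (x ` {1..k} \<union> y ` {1..k})" arbitrary: E x y rule: less_induct)
  case less
  have source: "\<exists>P. linkage V E' k x' y' P"
    if kl: "k_linked V E' k" and V: "\<forall>j\<in>{1..k}. x' j \<in> V \<and> y' j \<in> V"
      and S: "x' ` {1..k} \<union> y' ` {1..k} = x ` {1..k} \<union> y ` {1..k}"
      and i: "i \<in> {1..k}" and rep: "x' i \<in> x' ` ({1..k} - {i}) \<union> y' ` {1..k}"
    for E' x' y' i
  proof -
    obtain w where V': "\<forall>j\<in>{1..k}. (x'(i := w)) j \<in> V \<and> y' j \<in> V"
      and decrease: "2 * k - card ((x'(i := w)) ` {1..k} \<union> y' ` {1..k})
        < 2 * k - card (x ` {1..k} \<union> y ` {1..k})"
      and extend: "\<And>P. linkage V E' k (x'(i := w)) y' P \<Longrightarrow> linkage V E' k x' y' (P(i := x' i # P i))"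
      using linkage_reduce_source[OF kl V i rep] unfolding S by metis
    obtain P where "linkage V E' k (x'(i := w)) y' P"
      using less.hyps[OF decrease kl V'] by metis
    then show ?thesis
      using extend by metis
  qed
  consider (source_repeated) i where "i \<in> {1..k}" "x i \<in> x ` ({1..k} - {i}) \<union> y ` {1..k}"
    | (target_repeated) i where "i \<in> {1..k}" "y i \<in> y ` ({1..k} - {i}) \<union> x ` {1..k}"
    | (distinct) "inj_on x {1..k}" "inj_on y {1..k}" "x ` {1..k} \<inter> y ` {1..k} = {}"
  proof (cases "\<exists>i\<in>{1..k}. x i \<in> x ` ({1..k} - {i}) \<union> y ` {1..k}
      \<or> y i \<in> y ` ({1..k} - {i}) \<union> x ` {1..k}")
    case True
    then show ?thesis
      using that(1,2) by metis
  next
    case False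
    then show ?thesis
      by (intro that(3)) (auto intro!: inj_on_if_notin_image_Diff)
  qed
  then show ?case
  proof cases
    case source_repeated
    then show ?thesis
      using source[OF less.prems] by blast
  next
    case target_repeated
    then obtain P where "linkage V E\<inverse>\<inverse> k y x P"
      using source[OF k_linked_conversep[OF less.prems(1)], of y x] less.prems(2) by (auto simp: Un_commute)
    then show ?thesis
      using linkage_conversep by fastforce
  next
    case distinct
    then show ?thesis
      using k_linkedD[OF less.prems] linkage_if_disjoint_paths by metis
  qed
qed

lemma k_linked_iff_linkage:
  "k_linked V E k \<longleftrightarrow> 2 * k \<le> card V
     \<and> (\<forall>x y. (\<forall>i\<in>{1..k}. x i \<in> V \<and> y i \<in> V) \<longrightarrow> (\<exists>P. linkage V E k x y P))"
proof
  assume "k_linked V E k"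
  then show "2 * k \<le> card V
     \<and> (\<forall>x y. (\<forall>i\<in>{1..k}. x i \<in> V \<and> y i \<in> V) \<longrightarrow> (\<exists>P. linkage V E k x y P))"
    using linkage_if_k_linked[of V E k] by (simp add: k_linked_def)
next
  assume R: "2 * k \<le> card V
     \<and> (\<forall>x y. (\<forall>i\<in>{1..k}. x i \<in> V \<and> y i \<in> V) \<longrightarrow> (\<exists>P. linkage V E k x y P))"
  show "k_linked V E k"
    unfolding k_linked_def
  proof (intro conjI allI impI)
    show "2 * k \<le> card V"
      using R by simp
  next
    fix x y :: "nat \<Rightarrow> 'a"
    assume xy: "(\<forall>i\<in>{1..k}. x i \<in> V \<and> y i \<in> V) \<and> inj_on x {1..k} \<and> inj_on y {1..k}
      \<and> x ` {1..k} \<inter> y ` {1..k} = {}"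
    then obtain P where P: "linkage V E k x y P"
      using R by blast
    have "\<forall>i\<in>{1..k}. dpath V E (P i) \<and> hd (P i) = x i \<and> last (P i) = y i"
      using P unfolding linkage_def by blast
    moreover have "\<forall>i\<in>{1..k}. \<forall>j\<in>{1..k}. i \<noteq> j \<longrightarrow> set (P i) \<inter> set (P j) = {}"
      using disjoint_paths_if_linkage[OF P] xy by blast
    ultimately show "\<exists>P. (\<forall>i\<in>{1..k}. dpath V E (P i) \<and> hd (P i) = x i \<and> last (P i) = y i)
      \<and> (\<forall>i\<in>{1..k}. \<forall>j\<in>{1..k}. i \<noteq> j \<longrightarrow> set (P i) \<inter> set (P j) = {})"
      by blast
  qed
qed

theorem proposition2p1:
  fixes V :: "'a set" and E :: "'a \<Rightarrow> 'a \<Rightarrow> bool" and k :: nat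
  assumes "tournament V E"
  shows "k_linked V E k \<longleftrightarrow>
    (2 * k \<le> card V
     \<and> (\<forall>x y :: nat \<Rightarrow> 'a.
          (\<forall>i\<in>{1..k}. x i \<in> V \<and> y i \<in> V)
          \<longrightarrow> (\<exists>P :: nat \<Rightarrow> 'a list.
                (\<forall>i\<in>{1..k}. dpath V E (P i) \<and> hd (P i) = x i \<and> last (P i) = y i
                   \<and> set (P i) \<inter> (x ` {1..k} \<union> y ` {1..k}) = {x i, y i})
              \<and> (\<forall>i\<in>{1..k}. \<forall>j\<in>{1..k}. i \<noteq> j \<longrightarrow>
                   P i \<noteq> P j \<and> (set (P i) - {x i, y i}) \<inter> set (P j) = {}))))"
  using k_linked_iff_linkage[of V E k] unfolding linkage_def .

end
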